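(* Let $G=(V,E)$ be a finite tree, fix a vertex $i\in V$, and let $\phi:V\to\mathbb{R}_{\ge 0}$ be defined as below. Then for every starting vertex $j\in V$, the path $x_0=j,x_1,x_2,\dots$ produced by the descent rule (at each step $x_{k+1}$ is a neighbor of $x_k$ at which $\phi$ is minimal among all neighbors of $x_k$, continuing until $x_k=i$) is the shortest path from $j$ to $i$ in $G$, i.e. it has length equal to the graph distance $d(j,i)$, regardless of how ties are broken.
   Context: $L=D-A$ is the Laplacian matrix of $G$ ($D$ diagonal with $D_{vv}=\deg_G(v)$, $A$ the adjacency matrix). Let $C_1,\dots,C_m$ be the connected components of $G-i$ (the graph with $i$ and its incident edges deleted), and let $L_{C_k}$ denote the principal submatrix of $L$ indexed by the vertices of $C_k$ (with degrees taken in $G$). The function $\phi$ is defined by $\phi(i)=0$ and, on each $C_k$, $\phi$ equals a strictly positive eigenvector of $L_{C_k}$ associated with its smallest eigenvalue (this eigenvalue is positive and simple, and such a positive eigenvector exists and is unique up to positive scaling). *)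

theory Defs
  imports Complex_Main
begin

definition simple_graph :: "'a set \<Rightarrow> ('a \<Rightarrow> 'a \<Rightarrow> bool) \<Rightarrow> bool" where
  "simple_graph V E \<longleftrightarrow> finite V \<and> (\<forall>u v. E u v \<longrightarrow> u \<in> V \<and> v \<in> V)
     \<and> (\<forall>u v. E u v \<longrightarrow> E v u) \<and> (\<forall>u. \<not> E u u)"

definition edges :: "('a \<Rightarrow> 'a \<Rightarrow> bool) \<Rightarrow> 'a set set" where
  "edges E = {{u, v} | u v. E u v}"

definition connected_graph :: "'a set \<Rightarrow> ('a \<Rightarrow> 'a \<Rightarrow> bool) \<Rightarrow> bool" where
  "connected_graph V E \<longleftrightarrow> (\<forall>u\<in>V. \<forall>v\<in>V. E\<^sup>*\<^sup>* u v)"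

definition is_tree :: "'a set \<Rightarrow> ('a \<Rightarrow> 'a \<Rightarrow> bool) \<Rightarrow> bool" where
  "is_tree V E \<longleftrightarrow> simple_graph V E \<and> V \<noteq> {} \<and> connected_graph V E
     \<and> card (edges E) = card V - 1"

definition deg :: "('a \<Rightarrow> 'a \<Rightarrow> bool) \<Rightarrow> 'a \<Rightarrow> nat" where
  "deg E u = card {w. E u w}"

definition graph_dist :: "('a \<Rightarrow> 'a \<Rightarrow> bool) \<Rightarrow> 'a \<Rightarrow> 'a \<Rightarrow> nat" where
  "graph_dist E u v = (LEAST n. \<exists>p :: nat \<Rightarrow> 'a. p 0 = u \<and> p n = v \<and> (\<forall>k<n. E (p k) (p (Suc k))))"

definition del_vertex :: "('a \<Rightarrow> 'a \<Rightarrow> bool) \<Rightarrow> 'a \<Rightarrow> 'a \<Rightarrow> 'a \<Rightarrow> bool" where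
  "del_vertex E i u v \<longleftrightarrow> E u v \<and> u \<noteq> i \<and> v \<noteq> i"

definition components_minus :: "'a set \<Rightarrow> ('a \<Rightarrow> 'a \<Rightarrow> bool) \<Rightarrow> 'a \<Rightarrow> 'a set set" where
  "components_minus V E i = {{w \<in> V - {i}. (del_vertex E i)\<^sup>*\<^sup>* u w} | u. u \<in> V - {i}}"

text \<open>Action of the principal submatrix L_C of the Laplacian L = D - A of G
  (degrees taken in G) on a vector indexed by C.\<close>
definition lap_sub :: "('a \<Rightarrow> 'a \<Rightarrow> bool) \<Rightarrow> 'a set \<Rightarrow> ('a \<Rightarrow> real) \<Rightarrow> 'a \<Rightarrow> real" where
  "lap_sub E C x u = real (deg E u) * x u - (\<Sum>w\<in>{w\<in>C. E u w}. x w)"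

definition is_eigenpair_sub :: "('a \<Rightarrow> 'a \<Rightarrow> bool) \<Rightarrow> 'a set \<Rightarrow> real \<Rightarrow> ('a \<Rightarrow> real) \<Rightarrow> bool" where
  "is_eigenpair_sub E C \<mu> x \<longleftrightarrow> (\<exists>u\<in>C. x u \<noteq> 0) \<and> (\<forall>u\<in>C. lap_sub E C x u = \<mu> * x u)"

definition is_phi :: "'a set \<Rightarrow> ('a \<Rightarrow> 'a \<Rightarrow> bool) \<Rightarrow> 'a \<Rightarrow> ('a \<Rightarrow> real) \<Rightarrow> bool" where
  "is_phi V E i \<phi> \<longleftrightarrow> \<phi> i = 0 \<and>
     (\<forall>C\<in>components_minus V E i. (\<forall>u\<in>C. \<phi> u > 0) \<and>
        (\<exists>lam. is_eigenpair_sub E C lam \<phi> \<and> (\<forall>\<mu> x. is_eigenpair_sub E C \<mu> x \<longrightarrow> lam \<le> \<mu>)))"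

definition descent_run :: "('a \<Rightarrow> 'a \<Rightarrow> bool) \<Rightarrow> 'a \<Rightarrow> ('a \<Rightarrow> real) \<Rightarrow> 'a \<Rightarrow> (nat \<Rightarrow> 'a) \<Rightarrow> bool" where
  "descent_run E i \<phi> j x \<longleftrightarrow> x 0 = j \<and>
     (\<forall>k. x k \<noteq> i \<longrightarrow> E (x k) (x (Suc k)) \<and> (\<forall>w. E (x k) w \<longrightarrow> \<phi> (x (Suc k)) \<le> \<phi> w))"

end

theory Submission
  imports Defs
begin

text \<open>Root the tree at i. Summing the eigenvector equation of \<phi> over a component C of G - i,
  only the edges into i survive, so the eigenvalue \<lambda> is positive, and at every u \<noteq> i
  (using \<phi>(i) = 0) \<lambda> \<phi>(u) is the sum of \<phi>(u) - \<phi>(w) over the neighbours w of u.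
  Every neighbour of u other than its parent is a child of u, so an induction from the leaves
  towards i gives \<phi>(parent v) < \<phi>(v) for all v \<noteq> i. Hence the parent is the unique neighbour
  minimising \<phi>, each descent step lowers the distance to i by one, and the run reaches i
  after exactly d(j, i) steps.\<close>

definition walk :: "('a \<Rightarrow> 'a \<Rightarrow> bool) \<Rightarrow> nat \<Rightarrow> 'a \<Rightarrow> 'a \<Rightarrow> bool" where
  "walk E n u v \<longleftrightarrow> (\<exists>p. p 0 = u \<and> p n = v \<and> (\<forall>k<n. E (p k) (p (Suc k))))"

lemma walk_0 [simp]: "walk E 0 u v \<longleftrightarrow> u = v"
  unfolding walk_def by (auto intro!: exI[of _ "\<lambda>_. u"])

lemma walk_Suc: "walk E (Suc n) u v \<longleftrightarrow> (\<exists>w. E u w \<and> walk E n w v)"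
proof
  assume "walk E (Suc n) u v"
  then obtain p where p: "p 0 = u" "p (Suc n) = v" "\<forall>k<Suc n. E (p k) (p (Suc k))"
    unfolding walk_def by blast
  then have "walk E n (p 1) v"
    unfolding walk_def by (intro exI[of _ "\<lambda>k. p (Suc k)"]) auto
  with p show "\<exists>w. E u w \<and> walk E n w v" by force
next
  assume "\<exists>w. E u w \<and> walk E n w v"
  then obtain w p where "E u w" "p 0 = w" "p n = v" "\<forall>k<n. E (p k) (p (Suc k))"
    unfolding walk_def by blast
  then show "walk E (Suc n) u v"
    unfolding walk_def
    by (intro exI[of _ "\<lambda>k. if k = 0 then u else p (k - 1)"]) (auto simp: less_Suc_eq_0_disj)
qed

lemma rtranclp_imp_walk: "E\<^sup>*\<^sup>* u v \<Longrightarrow> \<exists>n. walk E n u v"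
proof (induction rule: converse_rtranclp_induct)
  case base
  show ?case by (rule exI[of _ 0]) simp
next
  case (step y z)
  then show ?case by (meson walk_Suc)
qed

lemma walk_imp_rtranclp: "walk E n u v \<Longrightarrow> E\<^sup>*\<^sup>* u v"
proof (induction n arbitrary: u)
  case (Suc n)
  then obtain w where "E u w" "walk E n w v" by (auto simp: walk_Suc)
  with Suc.IH show ?case by (blast intro: converse_rtranclp_into_rtranclp)
qed simp

lemma graph_dist_eq_Least_walk: "graph_dist E u v = (LEAST n. walk E n u v)"
  by (simp add: graph_dist_def walk_def)

lemma walk_graph_dist: "E\<^sup>*\<^sup>* u v \<Longrightarrow> walk E (graph_dist E u v) u v"
  unfolding graph_dist_eq_Least_walk by (metis LeastI_ex rtranclp_imp_walk)

lemma graph_dist_le_walk: "walk E n u v \<Longrightarrow> graph_dist E u v \<le> n"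
  unfolding graph_dist_eq_Least_walk by (rule Least_le)

lemma graph_dist_refl [simp]: "graph_dist E v v = 0"
  using graph_dist_le_walk[of E 0 v v] by simp

lemma graph_dist_eq_0_iff:
  assumes "E\<^sup>*\<^sup>* u v"
  shows "graph_dist E u v = 0 \<longleftrightarrow> u = v"
  using walk_graph_dist[OF assms] by (metis graph_dist_refl walk_0)

lemma graph_dist_edge_le: "E u w \<Longrightarrow> E\<^sup>*\<^sup>* w v \<Longrightarrow> graph_dist E u v \<le> graph_dist E w v + 1"
proof -
  assume "E u w" "E\<^sup>*\<^sup>* w v"
  then have "walk E (Suc (graph_dist E w v)) u v" unfolding walk_Suc by (blast intro: walk_graph_dist)
  then show ?thesis by (simp add: graph_dist_le_walk)
qed

lemma graph_dist_first_step:
  assumes "E\<^sup>*\<^sup>* u v" "u \<noteq> v"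
  shows "\<exists>w. E u w \<and> graph_dist E w v + 1 = graph_dist E u v"
proof -
  have "graph_dist E u v \<noteq> 0" using assms by (simp add: graph_dist_eq_0_iff)
  then obtain n where n: "graph_dist E u v = Suc n" using not0_implies_Suc by blast
  then obtain w where w: "E u w" "walk E n w v"
    using walk_graph_dist[OF assms(1)] by (metis walk_Suc)
  have "graph_dist E w v \<le> n" using w(2) by (rule graph_dist_le_walk)
  moreover have "graph_dist E u v \<le> graph_dist E w v + 1"
    using graph_dist_edge_le[OF w(1) walk_imp_rtranclp[OF w(2)]] .
  ultimately show ?thesis using w(1) n by (intro exI[of _ w]) auto
qed

lemma sum_lap_sub:
  assumes "finite C" and sym: "\<And>u v. E u v \<Longrightarrow> E v u" and fin_nbrs: "\<And>v. v \<in> C \<Longrightarrow> finite {w. E v w}"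
  shows "(\<Sum>v\<in>C. lap_sub E C f v) = (\<Sum>v\<in>C. real (card {w. E v w \<and> w \<notin> C}) * f v)"
proof -
  have deg_split: "real (deg E v) = real (card {w\<in>C. E v w}) + real (card {w. E v w \<and> w \<notin> C})"
    if "v \<in> C" for v
  proof -
    have fin: "finite {w. E v w \<and> w \<notin> C}" using fin_nbrs[OF that] by simp
    have "deg E v = card ({w\<in>C. E v w} \<union> {w. E v w \<and> w \<notin> C})"
      unfolding deg_def by (rule arg_cong[where f = card]) blast
    also have "\<dots> = card {w\<in>C. E v w} + card {w. E v w \<and> w \<notin> C}"
      by (rule card_Un_disjoint) (use \<open>finite C\<close> fin in auto)
    finally show ?thesis by simp
  qed
  have inner: "(\<Sum>v\<in>C. \<Sum>w\<in>{w\<in>C. E v w}. f w) = (\<Sum>v\<in>C. real (card {w\<in>C. E v w}) * f v)"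
  proof -
    have "(\<Sum>v\<in>C. \<Sum>w\<in>{w\<in>C. E v w}. f w) = (\<Sum>w\<in>C. \<Sum>v\<in>{v\<in>C. E v w}. f w)"
      by (rule sum.swap_restrict[OF \<open>finite C\<close> \<open>finite C\<close>])
    also have "\<dots> = (\<Sum>w\<in>C. real (card {v\<in>C. E w v}) * f w)"
    proof (rule sum.cong[OF refl])
      fix w
      have "{v\<in>C. E v w} = {v\<in>C. E w v}" using sym by blast
      then show "(\<Sum>v\<in>{v\<in>C. E v w}. f w) = real (card {v\<in>C. E w v}) * f w" by simp
    qed
    finally show ?thesis .
  qed
  have "(\<Sum>v\<in>C. lap_sub E C f v)
      = (\<Sum>v\<in>C. real (deg E v) * f v) - (\<Sum>v\<in>C. \<Sum>w\<in>{w\<in>C. E v w}. f w)"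
    unfolding lap_sub_def by (rule sum_subtractf)
  also have "\<dots> = (\<Sum>v\<in>C. real (card {w. E v w \<and> w \<notin> C}) * f v)"
    unfolding inner sum_subtractf[symmetric]
  proof (rule sum.cong[OF refl])
    fix v assume "v \<in> C"
    then show "real (deg E v) * f v - real (card {w\<in>C. E v w}) * f v
        = real (card {w. E v w \<and> w \<notin> C}) * f v"
      by (simp only: deg_split) (simp add: algebra_simps)
  qed
  finally show ?thesis .
qed

locale rooted_tree =
  fixes V :: "'a set" and E :: "'a \<Rightarrow> 'a \<Rightarrow> bool" and i :: 'a
  assumes tree: "is_tree V E" and root_in_V: "i \<in> V"
begin

lemma finite_V: "finite V"
  using tree by (simp add: is_tree_def simple_graph_def)

lemma edge_in_V: "E u v \<Longrightarrow> u \<in> V \<and> v \<in> V"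
  using tree by (simp add: is_tree_def simple_graph_def)

lemma edge_sym: "E u v \<Longrightarrow> E v u"
  using tree by (simp add: is_tree_def simple_graph_def)

lemma reachable: "u \<in> V \<Longrightarrow> v \<in> V \<Longrightarrow> E\<^sup>*\<^sup>* u v"
  using tree by (simp add: is_tree_def connected_graph_def)

lemma card_edges: "card (edges E) = card V - 1"
  using tree by (simp add: is_tree_def)

lemma finite_neighbours: "finite {w. E v w}"
proof -
  have "{w. E v w} \<subseteq> V" using edge_in_V by blast
  then show ?thesis using finite_V by (rule finite_subset)
qed

lemma finite_edges: "finite (edges E)"
proof -
  have "edges E \<subseteq> (\<lambda>(u, v). {u, v}) ` (V \<times> V)"
    unfolding edges_def using edge_in_V by auto
  then show ?thesis using finite_V finite_subset by blast
qed

abbreviation depth :: "'a \<Rightarrow> nat" where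
  "depth v \<equiv> graph_dist E v i"

lemma depth_eq_0_iff: "v \<in> V \<Longrightarrow> depth v = 0 \<longleftrightarrow> v = i"
  by (simp add: graph_dist_eq_0_iff reachable root_in_V)

definition parent :: "'a \<Rightarrow> 'a" where
  "parent v = (SOME p. E v p \<and> depth p + 1 = depth v)"

lemma parent_spec:
  assumes "v \<in> V" "v \<noteq> i"
  shows "E v (parent v) \<and> depth (parent v) + 1 = depth v"
  unfolding parent_def using graph_dist_first_step[OF reachable[OF assms(1) root_in_V] assms(2)]
  by (rule someI_ex)

text \<open>The only place where |E| = |V| - 1 enters: the |V| - 1 parent edges are distinct,
  so they are all the edges.\<close>
lemma edges_eq_parent_edges: "edges E = (\<lambda>v. {v, parent v}) ` (V - {i})"
proof -
  have sub: "(\<lambda>v. {v, parent v}) ` (V - {i}) \<subseteq> edges E"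
    unfolding edges_def using parent_spec by blast
  have "inj_on (\<lambda>v. {v, parent v}) (V - {i})"
  proof (rule inj_onI)
    fix a b assume a: "a \<in> V - {i}" and b: "b \<in> V - {i}" and eq: "{a, parent a} = {b, parent b}"
    show "a = b"
    proof (rule ccontr)
      assume "a \<noteq> b"
      then have "a = parent b" "b = parent a" using eq by (auto simp: doubleton_eq_iff)
      then show False using parent_spec[of a] parent_spec[of b] a b by auto
    qed
  qed
  then have "card ((\<lambda>v. {v, parent v}) ` (V - {i})) = card (edges E)"
    by (simp add: card_image card_edges root_in_V finite_V)
  then show ?thesis using card_subset_eq[OF finite_edges sub] by simp
qed

lemma neighbour_is_parent_or_child:
  assumes "u \<in> V - {i}" "E u w" "w \<noteq> parent u"
  shows "w \<in> V - {i} \<and> parent w = u"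
proof -
  have "{u, w} \<in> edges E" unfolding edges_def using assms by blast
  then obtain v where v: "v \<in> V - {i}" "{u, w} = {v, parent v}"
    using edges_eq_parent_edges by auto
  then show ?thesis using assms(3) by (auto simp: doubleton_eq_iff)
qed

definition component :: "'a \<Rightarrow> 'a set" where
  "component u = {w \<in> V - {i}. (del_vertex E i)\<^sup>*\<^sup>* u w}"

lemma component_in_components_minus: "u \<in> V - {i} \<Longrightarrow> component u \<in> components_minus V E i"
  unfolding component_def components_minus_def by blast

lemma component_subset: "component u \<subseteq> V - {i}"
  unfolding component_def by blast

lemma self_in_component: "u \<in> V - {i} \<Longrightarrow> u \<in> component u"
  unfolding component_def by simp

lemma component_closed:
  assumes "v \<in> component u" "E v w" "w \<noteq> i"
  shows "w \<in> component u"
proof -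
  have "del_vertex E i v w" using assms unfolding component_def del_vertex_def by auto
  then have "(del_vertex E i)\<^sup>*\<^sup>* u w"
    using assms(1) unfolding component_def by (auto intro: rtranclp.rtrancl_into_rtrancl)
  then show ?thesis using assms edge_in_V unfolding component_def by blast
qed

lemma component_boundary:
  "v \<in> component u \<Longrightarrow> {w. E v w \<and> w \<notin> component u} = (if E v i then {i} else {})"
  using component_closed component_subset[of u] by auto

lemma component_has_root_neighbour: "v \<in> component u \<Longrightarrow> \<exists>r\<in>component u. E r i"
proof (induction "depth v" arbitrary: v rule: less_induct)
  case less
  then have v: "v \<in> V" "v \<noteq> i" using component_subset by auto
  show ?case
  proof (cases "parent v = i")
    case True
    then show ?thesis using parent_spec[OF v] less.prems by auto
  next
    case False
    then have "parent v \<in> component u" using component_closed less.prems parent_spec[OF v] by blast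
    moreover have "depth (parent v) < depth v" using parent_spec[OF v] by simp
    ultimately show ?thesis using less.hyps by blast
  qed
qed

end

locale tree_potential = rooted_tree +
  fixes \<phi> :: "'a \<Rightarrow> real"
  assumes phi: "is_phi V E i \<phi>"
begin

lemma phi_root: "\<phi> i = 0"
  using phi by (simp add: is_phi_def)

lemma phi_pos: "u \<in> V - {i} \<Longrightarrow> \<phi> u > 0"
  using phi component_in_components_minus self_in_component unfolding is_phi_def by blast

lemma eigenvalue_pos:
  assumes u: "u \<in> V - {i}" and eig: "is_eigenpair_sub E (component u) lam \<phi>"
  shows "lam > 0"
proof -
  let ?C = "component u"
  have fin_C: "finite ?C" using finite_subset[OF component_subset] finite_V by blast
  have "lam * (\<Sum>v\<in>?C. \<phi> v) = (\<Sum>v\<in>?C. lap_sub E ?C \<phi> v)"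
    using eig by (simp add: is_eigenpair_sub_def sum_distrib_left)
  also have "\<dots> = (\<Sum>v\<in>?C. real (card {w. E v w \<and> w \<notin> ?C}) * \<phi> v)"
    using fin_C edge_sym finite_neighbours by (rule sum_lap_sub)
  also have "\<dots> = (\<Sum>v\<in>?C. if E v i then \<phi> v else 0)"
    by (intro sum.cong refl) (simp add: component_boundary)
  also have "\<dots> = (\<Sum>v\<in>{v\<in>?C. E v i}. \<phi> v)"
    using fin_C by (rule sum.inter_filter[symmetric])
  finally have sum_eq: "lam * (\<Sum>v\<in>?C. \<phi> v) = (\<Sum>v\<in>{v\<in>?C. E v i}. \<phi> v)" .
  have pos_on_C: "v \<in> ?C \<Longrightarrow> \<phi> v > 0" for v using component_subset phi_pos by blast
  obtain r where "r \<in> ?C" "E r i"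
    using component_has_root_neighbour[OF self_in_component[OF u]] by blast
  then have "(\<Sum>v\<in>{v\<in>?C. E v i}. \<phi> v) > 0"
    using fin_C pos_on_C by (intro sum_pos2[of _ r]) (auto intro: less_imp_le)
  moreover have "(\<Sum>v\<in>?C. \<phi> v) > 0"
    using fin_C pos_on_C self_in_component[OF u] by (intro sum_pos2[of _ u]) (auto intro: less_imp_le)
  ultimately show ?thesis using sum_eq by (metis zero_less_mult_pos2)
qed

lemma phi_balance:
  assumes u: "u \<in> V - {i}"
  shows "\<exists>lam>0. lam * \<phi> u = (\<Sum>w\<in>{w. E u w}. \<phi> u - \<phi> w)"
proof -
  obtain lam where eig: "is_eigenpair_sub E (component u) lam \<phi>"
    using phi component_in_components_minus[OF u] unfolding is_phi_def by blast
  have "(\<Sum>w\<in>{w\<in>component u. E u w}. \<phi> w) = (\<Sum>w\<in>{w. E u w}. \<phi> w)"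
    using finite_neighbours component_closed[OF self_in_component[OF u]] phi_root
    by (intro sum.mono_neutral_left) auto
  moreover have "lap_sub E (component u) \<phi> u = lam * \<phi> u"
    using eig self_in_component[OF u] by (simp add: is_eigenpair_sub_def)
  ultimately have "lam * \<phi> u = real (deg E u) * \<phi> u - (\<Sum>w\<in>{w. E u w}. \<phi> w)"
    by (simp add: lap_sub_def)
  also have "\<dots> = (\<Sum>w\<in>{w. E u w}. \<phi> u - \<phi> w)"
    by (simp add: sum_subtractf deg_def)
  finally show ?thesis using eigenvalue_pos[OF u eig] by blast
qed

lemma phi_parent_less: "v \<in> V - {i} \<Longrightarrow> \<phi> (parent v) < \<phi> v"
proof (induction v rule: measure_induct_rule[where f = "\<lambda>v. Max (depth ` V) - depth v"])
  case (less v)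
  obtain lam where lam: "lam > 0" "lam * \<phi> v = (\<Sum>w\<in>{w. E v w}. \<phi> v - \<phi> w)"
    using phi_balance[OF less.prems] by blast
  have parent_nbr: "parent v \<in> {w. E v w}" using parent_spec less.prems by blast
  have children: "\<phi> v - \<phi> w \<le> 0" if "w \<in> {w. E v w} - {parent v}" for w
  proof -
    have w: "w \<in> V - {i}" "parent w = v"
      using that neighbour_is_parent_or_child[OF less.prems, of w] by simp_all
    then have "depth w = depth v + 1" using parent_spec[of w] by simp
    moreover have "depth w \<le> Max (depth ` V)" using w(1) finite_V by (intro Max_ge) auto
    ultimately have "Max (depth ` V) - depth w < Max (depth ` V) - depth v" by linarith
    from less.IH[OF this w(1)] show ?thesis using w(2) by simp
  qed
  have "lam * \<phi> v = (\<phi> v - \<phi> (parent v)) + (\<Sum>w\<in>{w. E v w} - {parent v}. \<phi> v - \<phi> w)"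
    using lam(2) sum.remove[OF finite_neighbours parent_nbr, of "\<lambda>w. \<phi> v - \<phi> w"] by simp
  moreover have "(\<Sum>w\<in>{w. E v w} - {parent v}. \<phi> v - \<phi> w) \<le> 0"
    using children by (rule sum_nonpos)
  moreover have "lam * \<phi> v > 0" using lam(1) phi_pos[OF less.prems] by simp
  ultimately show ?case by linarith
qed

lemma descent_step_is_parent:
  assumes "u \<in> V - {i}" "E u w" "\<forall>w'. E u w' \<longrightarrow> \<phi> w \<le> \<phi> w'"
  shows "w = parent u"
proof (rule ccontr)
  assume "w \<noteq> parent u"
  then have "w \<in> V - {i}" "parent w = u"
    using neighbour_is_parent_or_child[OF assms(1,2)] by simp_all
  then have "\<phi> u < \<phi> w" using phi_parent_less[of w] by simp
  moreover have "\<phi> (parent u) < \<phi> u" using phi_parent_less assms(1) .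
  moreover have "\<phi> w \<le> \<phi> (parent u)" using assms(1,3) parent_spec[of u] by simp
  ultimately show False by simp
qed

lemma descent_run_depth:
  assumes run: "descent_run E i \<phi> j x" and "j \<in> V" and "k \<le> depth j"
  shows "x k \<in> V \<and> depth (x k) = depth j - k"
  using assms(3)
proof (induction k)
  case 0
  then show ?case using run \<open>j \<in> V\<close> by (simp add: descent_run_def)
next
  case (Suc k)
  then have xk: "x k \<in> V" "depth (x k) = depth j - k" by auto
  with Suc.prems have "depth (x k) \<noteq> 0" by simp
  then have "x k \<noteq> i" by auto
  then have "x (Suc k) = parent (x k)"
    using run descent_step_is_parent xk(1) unfolding descent_run_def by blast
  then show ?case using parent_spec[OF xk(1) \<open>x k \<noteq> i\<close>] edge_in_V xk by auto
qed

end

theorem theorem2: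
  fixes V :: "'a set" and E :: "'a \<Rightarrow> 'a \<Rightarrow> bool" and i j :: 'a
    and \<phi> :: "'a \<Rightarrow> real" and x :: "nat \<Rightarrow> 'a"
  assumes "is_tree V E" and "i \<in> V" and "is_phi V E i \<phi>"
    and "j \<in> V" and "descent_run E i \<phi> j x"
  shows "\<exists>n. x n = i \<and> (\<forall>k<n. x k \<noteq> i) \<and> n = graph_dist E j i"
proof -
  interpret tree_potential V E i \<phi> using assms(1-3) by unfold_locales
  let ?n = "graph_dist E j i"
  have "x ?n \<in> V" "depth (x ?n) = 0" using descent_run_depth[OF assms(5,4) le_refl] by simp_all
  then have "x ?n = i" using depth_eq_0_iff by blast
  moreover have "x k \<noteq> i" if "k < ?n" for k
    using descent_run_depth[OF assms(5,4), of k] that by auto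
  ultimately show ?thesis by blast
qed

end
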